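(* Let $G$ be a group generated by a set $X=\{x_1,\dots,x_n\}$ of cardinality $n$ with non-trivial center $Z=Z(G)$. Let $\bar G=G/Z$ with generating set $\bar X$ the image of $X$. Suppose the commutator width $\mathrm{cw}(G)=l$ and $\mathrm{pw}(\bar G,\bar X)=k$ (both finite). Then $$\mathrm{pw}(G,X)\le n+l(2k+\varepsilon),$$ where $\varepsilon=0$ if $k$ is even and $\varepsilon=1$ if $k$ is odd.
   Context: A palindrome in a group generated by a set $X$ is an element represented by a reduced word in $X^{\pm1}$ reading the same forwards and backwards; $l_{\mathcal P}(g)$ is the minimal number of palindromes whose product is $g$; $\mathrm{pw}(G,X)=\sup_{g\in G}l_{\mathcal P}(g)$. The commutator is $[g,h]=g^{-1}h^{-1}gh$; the commutator length of $g\in G'=[G,G]$ is the minimal number of commutators whose product is $g$, and $\mathrm{cw}(G)$ is the supremum of commutator lengths over $G'$. *)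

theory Defs
  imports "HOL-Algebra.Algebra" "HOL-Library.Extended_Nat"
begin

definition center :: "('a, 'b) monoid_scheme \<Rightarrow> 'a set" where
  "center G = {z \<in> carrier G. \<forall>g \<in> carrier G. z \<otimes>\<^bsub>G\<^esub> g = g \<otimes>\<^bsub>G\<^esub> z}"

text \<open>Words in S^{+-1}: a letter is (s, True) for s and (s, False) for s^{-1}.\<close>
definition word_over :: "'a set \<Rightarrow> ('a \<times> bool) list \<Rightarrow> bool" where
  "word_over S w \<longleftrightarrow> (\<forall>l \<in> set w. fst l \<in> S)"

definition reduced_word :: "('a \<times> bool) list \<Rightarrow> bool" where
  "reduced_word w \<longleftrightarrow> (\<forall>i. Suc i < length w \<longrightarrow>
      \<not> (fst (w ! i) = fst (w ! Suc i) \<and> snd (w ! i) \<noteq> snd (w ! Suc i)))"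

definition word_eval :: "('a, 'b) monoid_scheme \<Rightarrow> ('a \<times> bool) list \<Rightarrow> 'a" where
  "word_eval G w = foldr (\<lambda>l acc. (if snd l then fst l else inv\<^bsub>G\<^esub> (fst l)) \<otimes>\<^bsub>G\<^esub> acc) w \<one>\<^bsub>G\<^esub>"

definition palindromes :: "('a, 'b) monoid_scheme \<Rightarrow> 'a set \<Rightarrow> 'a set" where
  "palindromes G S = {word_eval G w | w. word_over S w \<and> reduced_word w \<and> rev w = w}"

definition list_prod :: "('a, 'b) monoid_scheme \<Rightarrow> 'a list \<Rightarrow> 'a" where
  "list_prod G xs = foldr (\<lambda>x acc. x \<otimes>\<^bsub>G\<^esub> acc) xs \<one>\<^bsub>G\<^esub>"

definition pal_length :: "('a, 'b) monoid_scheme \<Rightarrow> 'a set \<Rightarrow> 'a \<Rightarrow> nat" where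
  "pal_length G S g = (LEAST m. \<exists>ps. length ps = m \<and> set ps \<subseteq> palindromes G S \<and> list_prod G ps = g)"

definition pal_width :: "('a, 'b) monoid_scheme \<Rightarrow> 'a set \<Rightarrow> enat" where
  "pal_width G S = (SUP g \<in> carrier G. enat (pal_length G S g))"

definition commutator :: "('a, 'b) monoid_scheme \<Rightarrow> 'a \<Rightarrow> 'a \<Rightarrow> 'a" where
  "commutator G g h = inv\<^bsub>G\<^esub> g \<otimes>\<^bsub>G\<^esub> inv\<^bsub>G\<^esub> h \<otimes>\<^bsub>G\<^esub> g \<otimes>\<^bsub>G\<^esub> h"

definition comm_length :: "('a, 'b) monoid_scheme \<Rightarrow> 'a \<Rightarrow> nat" where
  "comm_length G g = (LEAST m. \<exists>ps. length ps = m \<and> set ps \<subseteq> carrier G \<times> carrier G \<and>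
      list_prod G (map (\<lambda>(a, b). commutator G a b) ps) = g)"

definition comm_width :: "('a, 'b) monoid_scheme \<Rightarrow> enat" where
  "comm_width G = (SUP g \<in> derived G (carrier G). enat (comm_length G g))"

end

theory Submission
  imports Defs
begin

text \<open>Modulo the derived subgroup G' the group is abelian and generated by x_1, ..., x_n, so
  every g is d x_1^e_1 ... x_n^e_n with d a product of at most l commutators, and each power
  x_i^e_i is a palindrome. For a commutator [a, b], a palindromic decomposition of aZ in G/Z lifts
  to a = z p with z central and p a product of k palindromes, so [a, b] = [p, b] = p^-1 (b^-1 p b),
  and p^-1 is again a product of k palindromes. If b is the value of a word v and r that of the
  reversed word, then b^-1 p_1 p_2 b = (b^-1 p_1 r^-1) (r p_2 b) with both factors palindromes;
  padding p with a trivial factor when k is odd, b^-1 p b is a product of k + \<epsilon> palindromes.\<close>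

section \<open>Words and their values\<close>

lemma word_over_simps [simp]:
  "word_over S []"
  "word_over S (l # w) \<longleftrightarrow> fst l \<in> S \<and> word_over S w"
  "word_over S (v @ w) \<longleftrightarrow> word_over S v \<and> word_over S w"
  "word_over S (rev w) \<longleftrightarrow> word_over S w"
  by (auto simp: word_over_def)

lemma word_over_mono: "word_over S w \<Longrightarrow> S \<subseteq> T \<Longrightarrow> word_over T w"
  by (auto simp: word_over_def)

definition word_inv :: "('a \<times> bool) list \<Rightarrow> ('a \<times> bool) list" where
  "word_inv w = rev (map (apsnd Not) w)"

lemma word_over_word_inv [simp]: "word_over S (word_inv w) \<longleftrightarrow> word_over S w"
  by (auto simp: word_over_def word_inv_def)

lemma rev_word_inv: "rev (word_inv w) = word_inv (rev w)"
  by (simp add: word_inv_def rev_map)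

definition letters_cancel :: "'a \<times> bool \<Rightarrow> 'a \<times> bool \<Rightarrow> bool" where
  "letters_cancel l l' \<longleftrightarrow> fst l = fst l' \<and> snd l \<noteq> snd l'"

lemma letters_cancel_sym: "letters_cancel l l' \<Longrightarrow> letters_cancel l' l"
  by (auto simp: letters_cancel_def)

lemma reduced_word_iff_successively:
  "reduced_word w \<longleftrightarrow> successively (\<lambda>l l'. \<not> letters_cancel l l') w"
  by (simp add: reduced_word_def letters_cancel_def successively_conv_nth)

lemma reduced_word_wrap:
  assumes "reduced_word u" and "rev u = u" and "u = [] \<or> \<not> letters_cancel c (hd u)"
  shows "reduced_word (c # u @ [c])"
proof (cases "u = []")
  case False
  then have "last u = hd u"
    using assms(2) by (metis hd_rev)
  moreover have "\<not> letters_cancel (hd u) c"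
    using assms(3) False letters_cancel_sym by blast
  ultimately show ?thesis
    using assms(1,3) False unfolding reduced_word_iff_successively
    by (simp add: successively_append_iff successively_Cons hd_append)
qed (simp add: reduced_word_def)

lemma reduced_word_unwrap: "reduced_word (c # u @ [d]) \<Longrightarrow> reduced_word u"
  unfolding reduced_word_iff_successively by (simp add: successively_append_iff successively_Cons)

lemma palindrome_split:
  assumes "rev w = w" and "2 \<le> length w"
  obtains c u where "w = c # u @ [c]" and "rev u = u"
proof -
  obtain c w' where w: "w = c # w'"
    using assms(2) by (cases w) auto
  with assms(2) obtain u d where w': "w' = u @ [d]"
    by (cases w' rule: rev_cases) auto
  have "d # rev u @ [c] = c # u @ [d]"
    using assms(1) unfolding w w' by (simp only: rev.simps rev_append append_Nil append_Cons)
  then have "d = c \<and> rev u @ [c] = u @ [d]"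
    by (simp only: list.inject)
  then show thesis
    using that w w' by (metis append1_eq_conv)
qed

lemma palindrome_wrap_cases:
  assumes "rev u = u"
  obtains "u = [] \<or> \<not> letters_cancel c (hd u)"
    | d where "u = [d]" "letters_cancel c d"
    | d v where "u = d # v @ [d]" "rev v = v" "letters_cancel c d"
proof (cases "u = [] \<or> \<not> letters_cancel c (hd u)")
  case False
  show thesis
  proof (cases "2 \<le> length u")
    case True
    with assms obtain d v where "u = d # v @ [d]" "rev v = v"
      by (rule palindrome_split)
    with False that(3) show thesis
      by simp
  next
    case short: False
    with False that(2) show thesis
      by (cases u) (auto simp: Suc_le_eq)
  qed
qed

lemma palindrome_induct [consumes 1, case_names Nil single wrap]:
  assumes "rev w = w" and "P []" and "\<And>c. P [c]"
    and "\<And>c u. rev u = u \<Longrightarrow> P u \<Longrightarrow> P (c # u @ [c])"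
  shows "P w"
  using assms(1)
proof (induction "length w" arbitrary: w rule: less_induct)
  case less
  show ?case
  proof (cases "2 \<le> length w")
    case True
    with less.prems obtain c u where "w = c # u @ [c]" "rev u = u"
      by (rule palindrome_split)
    with less.hyps assms(4) show ?thesis
      by simp
  next
    case False
    with assms(2,3) show ?thesis
      by (cases w) (auto simp: Suc_le_eq)
  qed
qed

lemma word_eval_Nil [simp]: "word_eval G [] = \<one>\<^bsub>G\<^esub>"
  by (simp add: word_eval_def)

lemma word_eval_Cons [simp]:
  "word_eval G (l # w) = (if snd l then fst l else inv\<^bsub>G\<^esub> (fst l)) \<otimes>\<^bsub>G\<^esub> word_eval G w"
  by (simp add: word_eval_def)

lemma list_prod_Nil [simp]: "list_prod G [] = \<one>\<^bsub>G\<^esub>"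
  by (simp add: list_prod_def)

lemma list_prod_Cons [simp]: "list_prod G (x # xs) = x \<otimes>\<^bsub>G\<^esub> list_prod G xs"
  by (simp add: list_prod_def)

context group
begin

lemma word_eval_closed: "word_over (carrier G) w \<Longrightarrow> word_eval G w \<in> carrier G"
  by (induction w) auto

lemma word_eval_append:
  "word_over (carrier G) v \<Longrightarrow> word_over (carrier G) w \<Longrightarrow>
    word_eval G (v @ w) = word_eval G v \<otimes> word_eval G w"
  by (induction v) (auto simp: word_eval_closed m_assoc)

lemma word_eval_word_inv:
  "word_over (carrier G) w \<Longrightarrow> word_eval G (word_inv w) = inv (word_eval G w)"
proof (induction w)
  case (Cons l w)
  have "word_inv (l # w) = word_inv w @ [apsnd Not l]"
    by (simp add: word_inv_def)
  with Cons show ?case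
    by (auto simp: word_eval_append word_eval_closed inv_mult_group apsnd_def map_prod_def
        split: prod.splits)
qed (simp add: word_inv_def)

lemma word_eval_cancel:
  "letters_cancel c d \<Longrightarrow> fst c \<in> carrier G \<Longrightarrow> word_eval G [c] \<otimes> word_eval G [d] = \<one>"
  by (cases "snd c") (auto simp: letters_cancel_def)

lemma word_eval_wrap:
  "fst c \<in> carrier G \<Longrightarrow> word_over (carrier G) v \<Longrightarrow>
    word_eval G (c # v @ [c]) = word_eval G [c] \<otimes> word_eval G v \<otimes> word_eval G [c]"
  by (simp add: word_eval_append word_eval_closed m_assoc)

lemma list_prod_closed: "set xs \<subseteq> carrier G \<Longrightarrow> list_prod G xs \<in> carrier G"
  by (induction xs) auto

lemma list_prod_append:
  "set xs \<subseteq> carrier G \<Longrightarrow> set ys \<subseteq> carrier G \<Longrightarrow>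
    list_prod G (xs @ ys) = list_prod G xs \<otimes> list_prod G ys"
  by (induction xs) (auto simp: m_assoc list_prod_closed)

lemma list_prod_int_pow_zero: "list_prod G (map (\<lambda>x. a x [^] (0::int)) xs) = \<one>"
  by (induction xs) simp_all

lemma inv_cancel_left:
  "c \<in> carrier G \<Longrightarrow> z \<in> carrier G \<Longrightarrow> inv c \<otimes> (c \<otimes> z) = z"
  "c \<in> carrier G \<Longrightarrow> z \<in> carrier G \<Longrightarrow> c \<otimes> (inv c \<otimes> z) = z"
  by (simp_all add: m_assoc[symmetric])

lemma generate_word:
  assumes "S \<subseteq> carrier G"
  shows "g \<in> generate G S \<Longrightarrow> \<exists>w. word_over S w \<and> word_eval G w = g"
proof (induction rule: generate.induct)
  case one
  show ?case
    by (intro exI[of _ "[]"]) simp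
next
  case (incl h)
  then show ?case
    using assms by (intro exI[of _ "[(h, True)]"]) auto
next
  case (inv h)
  then show ?case
    using assms by (intro exI[of _ "[(h, False)]"]) auto
next
  case (eng h1 h2)
  then obtain v1 v2
    where "word_over S v1" "word_eval G v1 = h1" "word_over S v2" "word_eval G v2 = h2"
    by blast
  then show ?case
    using assms word_over_mono[of S] by (intro exI[of _ "v1 @ v2"]) (simp add: word_eval_append)
qed

section \<open>Palindromes\<close>

text \<open>Reduce from the inside out: once the inner palindrome is reduced, a cancellation can
  only occur where the outer letters meet it, and then it occurs at both ends at once.\<close>

lemma palindromic_word_reduces:
  assumes "rev w = w" and "word_over S w" and S: "S \<subseteq> carrier G"
  shows "\<exists>w'. word_over S w' \<and> reduced_word w' \<and> rev w' = w' \<and> word_eval G w' = word_eval G w"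
  using assms(1,2)
proof (induction w rule: palindrome_induct)
  case Nil
  show ?case
    by (intro exI[of _ "[]"]) (simp add: reduced_word_def)
next
  case (single c)
  then show ?case
    by (intro exI[of _ "[c]"]) (simp add: reduced_word_def)
next
  case (wrap c u)
  then obtain u' where u': "word_over S u'" "reduced_word u'" "rev u' = u'"
    "word_eval G u' = word_eval G u"
    by auto
  have c: "fst c \<in> S" "fst c \<in> carrier G" and u: "word_over S u"
    using wrap.prems S by auto
  have carr: "word_over (carrier G) v" if "word_over S v" for v
    using that S by (rule word_over_mono)
  have eval: "word_eval G (c # u @ [c]) = word_eval G [c] \<otimes> word_eval G u' \<otimes> word_eval G [c]"
    using word_eval_wrap[OF c(2) carr[OF u]] u'(4) by simp
  show ?case
  proof (cases rule: palindrome_wrap_cases[OF u'(3), of c])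
    case 1
    have "word_eval G (c # u' @ [c]) = word_eval G (c # u @ [c])"
      using eval word_eval_wrap[OF c(2) carr[OF u'(1)]] by simp
    then show ?thesis
      using 1 u' c(1) reduced_word_wrap by (intro exI[of _ "c # u' @ [c]"]) simp
  next
    case (2 d)
    have "word_eval G (c # u @ [c]) = (word_eval G [c] \<otimes> word_eval G [d]) \<otimes> word_eval G [c]"
      using eval 2 c(2) by simp
    then show ?thesis
      using 2 c word_eval_cancel by (intro exI[of _ "[c]"]) (simp add: reduced_word_def)
  next
    case (3 d v)
    have d: "fst d \<in> carrier G" and v: "word_over S v"
      using 3 u'(1) c(2) by (auto simp: letters_cancel_def)
    have "word_eval G u' = word_eval G [d] \<otimes> word_eval G v \<otimes> word_eval G [d]"
      using 3(1) word_eval_wrap[OF d carr[OF v]] by simp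
    then have "word_eval G (c # u @ [c]) =
        (word_eval G [c] \<otimes> word_eval G [d]) \<otimes> word_eval G v \<otimes> (word_eval G [d] \<otimes> word_eval G [c])"
      using eval c(2) d word_eval_closed[OF carr[OF v]] by (simp add: m_assoc)
    also have "\<dots> = word_eval G v"
      using word_eval_cancel[OF 3(3) c(2)] word_eval_cancel[OF letters_cancel_sym[OF 3(3)] d]
        word_eval_closed[OF carr[OF v]]
      by (simp del: word_eval_Cons)
    finally show ?thesis
      using 3 u'(2) v by (intro exI[of _ v]) (auto dest: reduced_word_unwrap)
  qed
qed

lemma palindromic_word_in_palindromes:
  assumes "S \<subseteq> carrier G" and "word_over S w" and "rev w = w"
  shows "word_eval G w \<in> palindromes G S"
proof -
  obtain w' where "word_over S w'" "reduced_word w'" "rev w' = w'" "word_eval G w' = word_eval G w"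
    using palindromic_word_reduces[OF assms(3,2,1)] by blast
  then show ?thesis
    unfolding palindromes_def by (auto intro!: exI[of _ w'])
qed

lemma palindromes_closed: "S \<subseteq> carrier G \<Longrightarrow> p \<in> palindromes G S \<Longrightarrow> p \<in> carrier G"
  unfolding palindromes_def using word_eval_closed word_over_mono by blast

lemma one_in_palindromes: "S \<subseteq> carrier G \<Longrightarrow> \<one> \<in> palindromes G S"
  using palindromic_word_in_palindromes[of S "[]"] by simp

lemma inv_in_palindromes:
  assumes S: "S \<subseteq> carrier G" and "p \<in> palindromes G S"
  shows "inv p \<in> palindromes G S"
proof -
  obtain w where w: "word_over S w" "rev w = w" "p = word_eval G w"
    using assms(2) unfolding palindromes_def by blast
  have "word_eval G (word_inv w) \<in> palindromes G S"
    using S w by (intro palindromic_word_in_palindromes) (simp_all add: rev_word_inv)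
  then show ?thesis
    using w word_eval_word_inv word_over_mono[OF w(1) S] by simp
qed

lemma word_eval_replicate: "x \<in> carrier G \<Longrightarrow> word_eval G (replicate m (x, True)) = x [^] m"
proof (induction m)
  case (Suc m)
  then have "word_eval G (replicate (Suc m) (x, True)) = x \<otimes> x [^] m"
    by simp
  also have "\<dots> = x [^] Suc m"
    by (rule nat_pow_Suc2[symmetric, OF Suc.prems])
  finally show ?case .
qed simp

lemma generator_pow_in_palindromes:
  assumes S: "S \<subseteq> carrier G" and x: "x \<in> S"
  shows "x [^] (i::int) \<in> palindromes G S"
proof -
  have "x [^] m \<in> palindromes G S" for m :: nat
  proof -
    have "word_eval G (replicate m (x, True)) = x [^] m"
      using subsetD[OF S x] by (rule word_eval_replicate)
    moreover have "word_eval G (replicate m (x, True)) \<in> palindromes G S"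
      using S x by (intro palindromic_word_in_palindromes) (auto simp: word_over_def)
    ultimately show ?thesis
      by simp
  qed
  then have "inv (x [^] nat (- i)) \<in> palindromes G S" "x [^] nat i \<in> palindromes G S"
    using inv_in_palindromes[OF S] by blast+
  then show ?thesis
    unfolding int_pow_def2 by (cases "i < 0") (simp_all only: if_True if_False)
qed

lemma palindrome_sandwich:
  assumes S: "S \<subseteq> carrier G" and v: "word_over S v" and "p \<in> palindromes G S"
  shows "word_eval G (rev v) \<otimes> p \<otimes> word_eval G v \<in> palindromes G S"
proof -
  obtain w where w: "word_over S w" "rev w = w" "p = word_eval G w"
    using assms(3) unfolding palindromes_def by blast
  have carr: "word_over (carrier G) (rev v)" "word_over (carrier G) w" "word_over (carrier G) v"
    using v w(1) S by (auto intro: word_over_mono)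
  have "word_eval G (rev v @ w @ v) \<in> palindromes G S"
    using S v w by (intro palindromic_word_in_palindromes) simp_all
  then show ?thesis
    using carr w(3) by (simp add: word_eval_append word_eval_closed m_assoc)
qed

lemma inv_palindrome_sandwich:
  assumes S: "S \<subseteq> carrier G" and v: "word_over S v" and p: "p \<in> palindromes G S"
  shows "inv (word_eval G v) \<otimes> p \<otimes> inv (word_eval G (rev v)) \<in> palindromes G S"
proof -
  have "word_eval G (rev (word_inv (rev v))) \<otimes> p \<otimes> word_eval G (word_inv (rev v)) \<in> palindromes G S"
    using S v p by (intro palindrome_sandwich) simp_all
  moreover have "word_over (carrier G) v" "word_over (carrier G) (rev v)"
    using v S by (auto intro: word_over_mono)
  ultimately show ?thesis
    by (simp add: rev_word_inv word_eval_word_inv)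
qed

end

section \<open>Products of palindromes\<close>

definition pal_products :: "('a, 'b) monoid_scheme \<Rightarrow> 'a set \<Rightarrow> nat \<Rightarrow> 'a set" where
  "pal_products G S m = {list_prod G ps | ps. length ps = m \<and> set ps \<subseteq> palindromes G S}"

lemma pal_length_eq_Least: "pal_length G S g = (LEAST m. g \<in> pal_products G S m)"
  unfolding pal_length_def pal_products_def by (intro arg_cong[where f = Least] ext) auto

lemma pal_length_le: "g \<in> pal_products G S m \<Longrightarrow> pal_length G S g \<le> m"
  by (simp add: pal_length_eq_Least Least_le)

lemma in_pal_products_pal_length:
  "g \<in> pal_products G S m \<Longrightarrow> g \<in> pal_products G S (pal_length G S g)"
  unfolding pal_length_eq_Least by (rule LeastI)

lemma pal_length_le_pal_width: "g \<in> carrier G \<Longrightarrow> enat (pal_length G S g) \<le> pal_width G S"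
  unfolding pal_width_def by (rule SUP_upper)

lemma pal_width_le:
  "(\<And>g. g \<in> carrier G \<Longrightarrow> g \<in> pal_products G S m) \<Longrightarrow> pal_width G S \<le> enat m"
  unfolding pal_width_def by (rule SUP_least) (simp add: pal_length_le)

lemma pal_products_0 [simp]: "pal_products G S 0 = {\<one>\<^bsub>G\<^esub>}"
  by (simp add: pal_products_def)

lemma pal_products_Suc:
  "pal_products G S (Suc m) =
    {p \<otimes>\<^bsub>G\<^esub> x | p x. p \<in> palindromes G S \<and> x \<in> pal_products G S m}"
proof (rule Set.set_eqI, rule iffI)
  fix g
  assume "g \<in> pal_products G S (Suc m)"
  then obtain p ps where "g = p \<otimes>\<^bsub>G\<^esub> list_prod G ps" "p \<in> palindromes G S"
    "length ps = m" "set ps \<subseteq> palindromes G S"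
    unfolding pal_products_def by (auto simp: length_Suc_conv)
  then show "g \<in> {p \<otimes>\<^bsub>G\<^esub> x | p x. p \<in> palindromes G S \<and> x \<in> pal_products G S m}"
    unfolding pal_products_def by blast
next
  fix g
  assume "g \<in> {p \<otimes>\<^bsub>G\<^esub> x | p x. p \<in> palindromes G S \<and> x \<in> pal_products G S m}"
  then obtain p ps where "g = list_prod G (p # ps)" "p \<in> palindromes G S"
    "length ps = m" "set ps \<subseteq> palindromes G S"
    unfolding pal_products_def by auto
  then show "g \<in> pal_products G S (Suc m)"
    unfolding pal_products_def by (intro CollectI exI[of _ "p # ps"]) simp
qed

context group
begin

lemma pal_products_closed:
  assumes "S \<subseteq> carrier G"
  shows "x \<in> pal_products G S m \<Longrightarrow> x \<in> carrier G"
proof (induction m arbitrary: x)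
  case (Suc m)
  then show ?case
    using palindromes_closed[OF assms] by (auto simp: pal_products_Suc)
qed simp

lemma pal_products_mult:
  assumes S: "S \<subseteq> carrier G"
  shows "x \<in> pal_products G S m \<Longrightarrow> y \<in> pal_products G S m' \<Longrightarrow> x \<otimes> y \<in> pal_products G S (m + m')"
proof (induction m arbitrary: x)
  case 0
  then show ?case
    using pal_products_closed[OF S] by simp
next
  case (Suc m)
  then obtain p x' where x: "x = p \<otimes> x'" "p \<in> palindromes G S" "x' \<in> pal_products G S m"
    by (auto simp: pal_products_Suc)
  then have "x \<otimes> y = p \<otimes> (x' \<otimes> y)"
    using Suc.prems(2) palindromes_closed[OF S] pal_products_closed[OF S] by (simp add: m_assoc)
  then show ?case
    using x Suc.IH Suc.prems(2) by (auto simp: pal_products_Suc)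
qed

lemma palindrome_in_pal_products_1:
  assumes "S \<subseteq> carrier G" and "p \<in> palindromes G S"
  shows "p \<in> pal_products G S 1"
proof -
  have "p \<otimes> \<one> \<in> pal_products G S (Suc 0)"
    using assms(2) unfolding pal_products_Suc by auto
  then show ?thesis
    using palindromes_closed[OF assms] by simp
qed

lemma one_in_pal_products: "S \<subseteq> carrier G \<Longrightarrow> \<one> \<in> pal_products G S m"
proof (induction m)
  case (Suc m)
  have "\<one> \<otimes> \<one> \<in> pal_products G S (Suc m)"
    using one_in_palindromes[OF Suc.prems] Suc.IH[OF Suc.prems] unfolding pal_products_Suc by blast
  then show ?case
    by simp
qed simp

lemma pal_products_mono:
  assumes S: "S \<subseteq> carrier G" and "m \<le> m'"
  shows "pal_products G S m \<subseteq> pal_products G S m'"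
proof
  fix x
  assume x: "x \<in> pal_products G S m"
  then have "x \<otimes> \<one> \<in> pal_products G S (m + (m' - m))"
    using S by (intro pal_products_mult one_in_pal_products)
  then show "x \<in> pal_products G S m'"
    using pal_products_closed[OF S x] assms(2) by simp
qed

lemma inv_in_pal_products:
  assumes S: "S \<subseteq> carrier G"
  shows "x \<in> pal_products G S m \<Longrightarrow> inv x \<in> pal_products G S m"
proof (induction m arbitrary: x)
  case (Suc m)
  then obtain p x' where x: "x = p \<otimes> x'" "p \<in> palindromes G S" "x' \<in> pal_products G S m"
    by (auto simp: pal_products_Suc)
  then have "inv x' \<otimes> inv p \<in> pal_products G S (m + 1)"
    using S Suc.IH by (intro pal_products_mult palindrome_in_pal_products_1 inv_in_palindromes)
  moreover have "inv x = inv x' \<otimes> inv p"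
    using x palindromes_closed[OF S] pal_products_closed[OF S] by (simp add: inv_mult_group)
  ultimately show ?case
    by simp
qed simp

lemma list_prod_in_pal_products:
  assumes S: "S \<subseteq> carrier G"
  shows "set cs \<subseteq> pal_products G S m \<Longrightarrow> list_prod G cs \<in> pal_products G S (m * length cs)"
  by (induction cs) (auto intro: pal_products_mult[OF S])

lemma conj_in_pal_products:
  assumes S: "S \<subseteq> carrier G" and v: "word_over S v" and "even m"
  shows "x \<in> pal_products G S m \<Longrightarrow> inv (word_eval G v) \<otimes> x \<otimes> word_eval G v \<in> pal_products G S m"
proof -
  define b where "b = word_eval G v"
  define r where "r = word_eval G (rev v)"
  have carr: "word_over (carrier G) v" "word_over (carrier G) (rev v)"
    using v S by (auto intro: word_over_mono)
  have b: "b \<in> carrier G" and r: "r \<in> carrier G"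
    using carr by (simp_all add: b_def r_def word_eval_closed)
  have left: "inv b \<otimes> p \<otimes> inv r \<in> palindromes G S" if "p \<in> palindromes G S" for p
    using inv_palindrome_sandwich[OF S v that] by (simp add: b_def r_def)
  have right: "r \<otimes> p \<otimes> b \<in> palindromes G S" if "p \<in> palindromes G S" for p
    using palindrome_sandwich[OF S v that] by (simp add: b_def r_def)
  obtain j where m: "m = 2 * j"
    using \<open>even m\<close> by blast
  show "x \<in> pal_products G S m \<Longrightarrow> inv b \<otimes> x \<otimes> b \<in> pal_products G S m"
    unfolding m
  proof (induction j arbitrary: x)
    case 0
    then show ?case
      using b by simp
  next
    case (Suc j)
    then obtain p q y where pqy: "x = p \<otimes> (q \<otimes> y)" "p \<in> palindromes G S" "q \<in> palindromes G S"
      "y \<in> pal_products G S (2 * j)"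
      by (auto simp: pal_products_Suc)
    have carr_pqy: "p \<in> carrier G" "q \<in> carrier G" "y \<in> carrier G"
      using pqy palindromes_closed[OF S] pal_products_closed[OF S] by auto
    have "inv b \<otimes> x \<otimes> b = (inv b \<otimes> p \<otimes> inv r) \<otimes> ((r \<otimes> q \<otimes> b) \<otimes> (inv b \<otimes> y \<otimes> b))"
      using pqy(1) carr_pqy b r by (simp add: m_assoc inv_cancel_left)
    moreover have "inv b \<otimes> y \<otimes> b \<in> pal_products G S (2 * j)"
      using Suc.IH pqy(4) .
    ultimately have "inv b \<otimes> x \<otimes> b \<in> pal_products G S (Suc (Suc (2 * j)))"
      using left[OF pqy(2)] right[OF pqy(3)] unfolding pal_products_Suc by auto
    then show ?case
      by simp
  qed
qed

lemma generate_in_pal_products: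
  assumes S: "S \<subseteq> carrier G"
  shows "g \<in> generate G S \<Longrightarrow> \<exists>m. g \<in> pal_products G S m"
proof (induction rule: generate.induct)
  case one
  show ?case
    using one_in_pal_products[OF S] by blast
next
  case (incl h)
  then have "h [^] (1::int) \<in> palindromes G S" and "h \<in> carrier G"
    using S by (auto intro: generator_pow_in_palindromes)
  then show ?case
    using palindrome_in_pal_products_1[OF S] by auto
next
  case (inv h)
  then have "inv (h [^] (1::int)) \<in> palindromes G S" and "h \<in> carrier G"
    using S by (auto intro: inv_in_palindromes generator_pow_in_palindromes)
  then show ?case
    using palindrome_in_pal_products_1[OF S] by auto
next
  case (eng h1 h2)
  then show ?case
    using pal_products_mult[OF S] by blast
qed

end

section \<open>Images under homomorphisms\<close>

context group_hom
begin

lemma word_eval_hom: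
  "word_over (carrier G) w \<Longrightarrow> h (word_eval G w) = word_eval H (map (apfst h) w)"
  by (induction w) (auto simp: G.word_eval_closed)

lemma hom_list_prod: "set xs \<subseteq> carrier G \<Longrightarrow> h (list_prod G xs) = list_prod H (map h xs)"
  by (induction xs) (auto simp: G.list_prod_closed)

lemma image_palindromes:
  assumes S: "S \<subseteq> carrier G"
  shows "h ` palindromes G S = palindromes H (h ` S)"
proof
  show "h ` palindromes G S \<subseteq> palindromes H (h ` S)"
  proof
    fix q
    assume "q \<in> h ` palindromes G S"
    then obtain w where w: "word_over S w" "rev w = w" "q = h (word_eval G w)"
      unfolding palindromes_def by blast
    have "word_eval H (map (apfst h) w) \<in> palindromes H (h ` S)"
      using S w(1,2) by (intro H.palindromic_word_in_palindromes) (auto simp: word_over_def rev_map)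
    then show "q \<in> palindromes H (h ` S)"
      using w word_eval_hom word_over_mono[OF w(1) S] by simp
  qed
next
  show "palindromes H (h ` S) \<subseteq> h ` palindromes G S"
  proof
    fix q
    assume "q \<in> palindromes H (h ` S)"
    then obtain W where W: "word_over (h ` S) W" "rev W = W" "q = word_eval H W"
      unfolding palindromes_def by blast
    define w where "w = map (apfst (inv_into S h)) W"
    have w: "word_over S w" "rev w = w"
      using W(1,2) by (auto simp: w_def word_over_def inv_into_into rev_map)
    have "map (apfst h) w = W"
      using W(1) by (auto simp: w_def word_over_def f_inv_into_f intro!: map_idI)
    then have "h (word_eval G w) = q"
      using W(3) word_eval_hom word_over_mono[OF w(1) S] by simp
    moreover have "word_eval G w \<in> palindromes G S"
      using S w by (rule G.palindromic_word_in_palindromes)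
    ultimately show "q \<in> h ` palindromes G S"
      by blast
  qed
qed

lemma image_pal_products:
  assumes S: "S \<subseteq> carrier G"
  shows "h ` pal_products G S m = pal_products H (h ` S) m"
proof (induction m)
  case (Suc m)
  show ?case
  proof (rule Set.set_eqI, rule iffI)
    fix y
    assume "y \<in> h ` pal_products G S (Suc m)"
    then obtain p x where px: "y = h (p \<otimes> x)" "p \<in> palindromes G S" "x \<in> pal_products G S m"
      by (auto simp: pal_products_Suc)
    then have "y = h p \<otimes>\<^bsub>H\<^esub> h x"
      using G.palindromes_closed[OF S] G.pal_products_closed[OF S] by simp
    moreover have "h p \<in> palindromes H (h ` S)" "h x \<in> pal_products H (h ` S) m"
      using px image_palindromes[OF S] Suc.IH by blast+
    ultimately show "y \<in> pal_products H (h ` S) (Suc m)"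
      unfolding pal_products_Suc by blast
  next
    fix y
    assume "y \<in> pal_products H (h ` S) (Suc m)"
    then obtain p x where px: "y = h p \<otimes>\<^bsub>H\<^esub> h x" "p \<in> palindromes G S" "x \<in> pal_products G S m"
      unfolding pal_products_Suc Suc.IH[symmetric] image_palindromes[OF S, symmetric] by blast
    then have "y = h (p \<otimes> x)"
      using G.palindromes_closed[OF S] G.pal_products_closed[OF S] by simp
    then show "y \<in> h ` pal_products G S (Suc m)"
      using px unfolding pal_products_Suc by blast
  qed
qed simp

end

context group
begin

lemma lift_from_quotient_pal_products:
  assumes N: "N \<lhd> G" and S: "S \<subseteq> carrier G" and gen: "generate G S = carrier G"
    and pw: "pal_width (G Mod N) ((\<lambda>x. N #> x) ` S) \<le> enat k" and a: "a \<in> carrier G"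
  shows "\<exists>x \<in> pal_products G S k. \<exists>z \<in> N. a = z \<otimes> x"
proof -
  interpret N: normal N G
    by (rule N)
  interpret h: group_hom G "G Mod N" "\<lambda>x. N #> x"
    unfolding group_hom_def group_hom_axioms_def
    using is_group N.factorgroup_is_group N.r_coset_hom_Mod by blast
  let ?T = "(\<lambda>x. N #> x) ` S"
  have T: "?T \<subseteq> carrier (G Mod N)"
    using S by auto
  obtain m where "a \<in> pal_products G S m"
    using generate_in_pal_products[OF S] gen a by blast
  then have "N #> a \<in> pal_products (G Mod N) ?T m"
    using h.image_pal_products[OF S] by blast
  then have "N #> a \<in> pal_products (G Mod N) ?T (pal_length (G Mod N) ?T (N #> a))"
    by (rule in_pal_products_pal_length)
  moreover have "enat (pal_length (G Mod N) ?T (N #> a)) \<le> enat k"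
    using pal_length_le_pal_width[OF h.hom_closed[OF a]] pw by (rule order_trans)
  ultimately have "N #> a \<in> pal_products (G Mod N) ?T k"
    using h.H.pal_products_mono[OF T] by auto
  then obtain x where x: "x \<in> pal_products G S k" "N #> x = N #> a"
    using h.image_pal_products[OF S] by (metis imageE)
  then have "a \<in> N #> x"
    using repr_independenceD[OF N.subgroup_axioms a] by simp
  then show ?thesis
    using x(1) unfolding r_coset_def by blast
qed

section \<open>Commutators\<close>

lemma centerI: "z \<in> carrier G \<Longrightarrow> (\<And>g. g \<in> carrier G \<Longrightarrow> z \<otimes> g = g \<otimes> z) \<Longrightarrow> z \<in> center G"
  unfolding center_def by blast

lemma center_closed: "z \<in> center G \<Longrightarrow> z \<in> carrier G"
  unfolding center_def by blast

lemma center_commute: "z \<in> center G \<Longrightarrow> g \<in> carrier G \<Longrightarrow> z \<otimes> g = g \<otimes> z"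
  unfolding center_def by blast

lemma subgroup_center: "subgroup (center G) G"
proof (rule subgroupI)
  show "center G \<subseteq> carrier G"
    using center_closed by blast
  show "center G \<noteq> {}"
    using centerI[of \<one>] by auto
next
  fix a
  assume a: "a \<in> center G"
  show "inv a \<in> center G"
  proof (rule centerI)
    fix g
    assume g: "g \<in> carrier G"
    have "inv a \<otimes> g = inv a \<otimes> (g \<otimes> a) \<otimes> inv a"
      using center_closed[OF a] g by (simp add: m_assoc)
    also have "\<dots> = g \<otimes> inv a"
      using center_closed[OF a] g
      by (simp add: center_commute[OF a g, symmetric] m_assoc[symmetric])
    finally show "inv a \<otimes> g = g \<otimes> inv a" .
  qed (use center_closed[OF a] in simp)
next
  fix a b
  assume a: "a \<in> center G" and b: "b \<in> center G"
  show "a \<otimes> b \<in> center G"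
  proof (rule centerI)
    fix g
    assume g: "g \<in> carrier G"
    have "a \<otimes> b \<otimes> g = a \<otimes> (g \<otimes> b)"
      using center_closed[OF a] center_closed[OF b] g by (simp add: m_assoc center_commute[OF b g])
    also have "\<dots> = g \<otimes> (a \<otimes> b)"
      using center_closed[OF a] center_closed[OF b] g
      by (simp add: m_assoc[symmetric] center_commute[OF a g])
    finally show "a \<otimes> b \<otimes> g = g \<otimes> (a \<otimes> b)" .
  qed (use center_closed[OF a] center_closed[OF b] in simp)
qed

lemma center_normal: "center G \<lhd> G"
proof (rule normal_invI[OF subgroup_center])
  fix x z
  assume x: "x \<in> carrier G" and z: "z \<in> center G"
  have "x \<otimes> z \<otimes> inv x = z"
    using center_closed[OF z] x by (simp add: center_commute[OF z x, symmetric] m_assoc)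
  then show "x \<otimes> z \<otimes> inv x \<in> center G"
    using z by simp
qed

lemma commutator_mult_central:
  assumes z: "z \<in> center G" and x: "x \<in> carrier G" and b: "b \<in> carrier G"
  shows "commutator G (z \<otimes> x) b = commutator G x b"
proof -
  have zc: "z \<in> carrier G"
    using center_closed[OF z] .
  have "commutator G (z \<otimes> x) b = inv x \<otimes> (inv z \<otimes> (inv b \<otimes> (z \<otimes> (x \<otimes> b))))"
    using zc x b by (simp add: commutator_def inv_mult_group m_assoc)
  also have "inv b \<otimes> (z \<otimes> (x \<otimes> b)) = z \<otimes> (inv b \<otimes> (x \<otimes> b))"
    using zc x b by (simp add: m_assoc[symmetric] center_commute[OF z, of "inv b"])
  finally show ?thesis
    using zc x b by (simp add: commutator_def inv_cancel_left m_assoc)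
qed

lemma commutator_in_pal_products:
  assumes S: "S \<subseteq> carrier G" and gen: "generate G S = carrier G"
    and reps: "\<And>a. a \<in> carrier G \<Longrightarrow> \<exists>x \<in> pal_products G S k. \<exists>z \<in> center G. a = z \<otimes> x"
    and a: "a \<in> carrier G" and b: "b \<in> carrier G"
  shows "commutator G a b \<in> pal_products G S (2 * k + (if even k then 0 else 1))"
proof -
  define e :: nat where "e = (if even k then 0 else 1)"
  obtain x z where x: "x \<in> pal_products G S k" and z: "z \<in> center G" and a_eq: "a = z \<otimes> x"
    using reps[OF a] by blast
  obtain v where v: "word_over S v" "word_eval G v = b"
    using generate_word[OF S] gen b by blast
  have xc: "x \<in> carrier G"
    using pal_products_closed[OF S x] .
  have "x \<in> pal_products G S (k + e)"
    using pal_products_mono[OF S le_add1] x by blast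
  then have "inv b \<otimes> x \<otimes> b \<in> pal_products G S (k + e)"
    using conj_in_pal_products[OF S v(1)] v(2) by (simp add: e_def)
  then have "inv x \<otimes> (inv b \<otimes> x \<otimes> b) \<in> pal_products G S (k + (k + e))"
    using pal_products_mult[OF S] inv_in_pal_products[OF S x] by blast
  moreover have "commutator G a b = inv x \<otimes> (inv b \<otimes> x \<otimes> b)"
    using commutator_mult_central[OF z xc b] a_eq xc b by (simp add: commutator_def m_assoc)
  ultimately show ?thesis
    by (simp add: e_def add.assoc mult_2)
qed

lemma derived_commutator_product:
  assumes "d \<in> derived G (carrier G)"
  shows "\<exists>cs. set cs \<subseteq> carrier G \<times> carrier G \<and> list_prod G (map (\<lambda>(a, b). commutator G a b) cs) = d"
  using assms unfolding derived_def
proof (induction rule: generate.induct)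
  case one
  show ?case
    by (intro exI[of _ "[]"]) simp
next
  case (incl h)
  then obtain a b where "a \<in> carrier G" "b \<in> carrier G" "h = a \<otimes> b \<otimes> inv a \<otimes> inv b"
    by auto
  then show ?case
    by (intro exI[of _ "[(inv a, inv b)]"]) (simp add: commutator_def)
next
  case (inv h)
  then obtain a b where "a \<in> carrier G" "b \<in> carrier G" "h = a \<otimes> b \<otimes> inv a \<otimes> inv b"
    by auto
  then show ?case
    by (intro exI[of _ "[(inv b, inv a)]"]) (simp add: commutator_def inv_mult_group m_assoc)
next
  case (eng h1 h2)
  then obtain cs1 cs2 where
    "set cs1 \<subseteq> carrier G \<times> carrier G" "list_prod G (map (\<lambda>(a, b). commutator G a b) cs1) = h1"
    "set cs2 \<subseteq> carrier G \<times> carrier G" "list_prod G (map (\<lambda>(a, b). commutator G a b) cs2) = h2"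
    by blast
  moreover have "set (map (\<lambda>(a, b). commutator G a b) cs) \<subseteq> carrier G"
    if "set cs \<subseteq> carrier G \<times> carrier G" for cs
    using that by (auto simp: commutator_def)
  ultimately show ?case
    by (intro exI[of _ "cs1 @ cs2"]) (simp add: list_prod_append)
qed

lemma derived_short_commutator_product:
  assumes "comm_width G \<le> enat l" and d: "d \<in> derived G (carrier G)"
  shows "\<exists>cs. length cs \<le> l \<and> set cs \<subseteq> carrier G \<times> carrier G \<and>
    list_prod G (map (\<lambda>(a, b). commutator G a b) cs) = d"
proof -
  let ?P = "\<lambda>m. \<exists>cs. length cs = m \<and> set cs \<subseteq> carrier G \<times> carrier G \<and>
    list_prod G (map (\<lambda>(a, b). commutator G a b) cs) = d"
  obtain cs where "set cs \<subseteq> carrier G \<times> carrier G"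
    "list_prod G (map (\<lambda>(a, b). commutator G a b) cs) = d"
    using derived_commutator_product[OF d] by blast
  then have "?P (length cs)"
    by (intro exI[of _ cs]) simp
  then have "?P (comm_length G d)"
    unfolding comm_length_def by (rule LeastI)
  moreover have "enat (comm_length G d) \<le> comm_width G"
    unfolding comm_width_def using d by (rule SUP_upper)
  then have "enat (comm_length G d) \<le> enat l"
    using assms(1) by (rule order_trans)
  then have "comm_length G d \<le> l"
    by simp
  ultimately show ?thesis
    by (metis (no_types, lifting))
qed

end

section \<open>Abelianisation\<close>

context comm_group
begin

lemma list_prod_int_pow_add:
  assumes "\<And>x. x \<in> set xs \<Longrightarrow> a x \<in> carrier G"
  shows "list_prod G (map (\<lambda>x. a x [^] (f x + g x :: int)) xs) =
    list_prod G (map (\<lambda>x. a x [^] f x) xs) \<otimes> list_prod G (map (\<lambda>x. a x [^] g x) xs)"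
  using assms
proof (induction xs)
  case (Cons y xs)
  have "a y \<in> carrier G" "set (map (\<lambda>x. a x [^] f x) xs) \<subseteq> carrier G"
    "set (map (\<lambda>x. a x [^] g x) xs) \<subseteq> carrier G"
    using Cons.prems by auto
  then show ?case
    using Cons by (simp add: int_pow_mult list_prod_closed m_ac)
qed simp

lemma list_prod_indicator:
  assumes "distinct xs" and "y \<in> set xs" and "c \<in> carrier G"
  shows "list_prod G (map (\<lambda>x. if x = y then c else \<one>) xs) = c"
proof -
  have "list_prod G (map (\<lambda>x. if x = y then c else \<one>) xs) = (if y \<in> set xs then c else \<one>)"
    using assms(1) by (induction xs) (auto simp: assms(3))
  then show ?thesis
    using assms(2) by simp
qed

lemma generate_int_pow_product:
  assumes "distinct xs" and a: "\<And>x. x \<in> set xs \<Longrightarrow> a x \<in> carrier G"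
  shows "y \<in> generate G (a ` set xs) \<Longrightarrow> \<exists>f. y = list_prod G (map (\<lambda>x. a x [^] (f x :: int)) xs)"
proof (induction rule: generate.induct)
  case one
  show ?case
    using list_prod_int_pow_zero[of a xs] by (intro exI[of _ "\<lambda>_. 0"]) simp
next
  case (incl y)
  then obtain x0 where x0: "x0 \<in> set xs" "y = a x0"
    by blast
  have "list_prod G (map (\<lambda>x. a x [^] (if x = x0 then 1 else 0 :: int)) xs) =
      list_prod G (map (\<lambda>x. if x = x0 then a x0 else \<one>) xs)"
    using a by (intro arg_cong[where f = "list_prod G"] map_cong) auto
  also have "\<dots> = y"
    using list_prod_indicator[OF assms(1) x0(1)] a x0 by simp
  finally show ?case
    by (intro exI[of _ "\<lambda>x. if x = x0 then 1 else 0"]) simp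
next
  case (inv y)
  then obtain x0 where x0: "x0 \<in> set xs" "y = a x0"
    by blast
  have "list_prod G (map (\<lambda>x. a x [^] (if x = x0 then - 1 else 0 :: int)) xs) =
      list_prod G (map (\<lambda>x. if x = x0 then inv (a x0) else \<one>) xs)"
    using a by (intro arg_cong[where f = "list_prod G"] map_cong) (auto simp: int_pow_neg)
  also have "\<dots> = inv y"
    using list_prod_indicator[OF assms(1) x0(1)] a x0 by simp
  finally show ?case
    by (intro exI[of _ "\<lambda>x. if x = x0 then - 1 else 0"]) simp
next
  case (eng y1 y2)
  then obtain f1 f2 where "y1 = list_prod G (map (\<lambda>x. a x [^] (f1 x :: int)) xs)"
    "y2 = list_prod G (map (\<lambda>x. a x [^] (f2 x :: int)) xs)"
    by blast
  then have "y1 \<otimes> y2 = list_prod G (map (\<lambda>x. a x [^] (f1 x + f2 x)) xs)"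
    using list_prod_int_pow_add[where f = f1 and g = f2, OF a] by simp
  then show ?case
    by (intro exI[of _ "\<lambda>x. f1 x + f2 x"]) simp
qed

end

context group
begin

lemma derived_times_generator_powers:
  assumes gen: "generate G (set xs) = carrier G" and xs: "set xs \<subseteq> carrier G" "distinct xs"
    and g: "g \<in> carrier G"
  shows "\<exists>d \<in> derived G (carrier G). \<exists>f. g = d \<otimes> list_prod G (map (\<lambda>x. x [^] (f x :: int)) xs)"
proof -
  define D where "D = derived G (carrier G)"
  interpret D: normal D G
    unfolding D_def by (rule derived_self_is_normal)
  interpret Q: comm_group "G Mod D"
    unfolding D_def by (rule derived_quot_is_comm_group)
  interpret h: group_hom G "G Mod D" "\<lambda>x. D #> x"
    unfolding group_hom_def group_hom_axioms_def
    using is_group D.factorgroup_is_group D.r_coset_hom_Mod by blast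
  have "D #> g \<in> generate (G Mod D) ((\<lambda>x. D #> x) ` set xs)"
    using h.generate_img[OF xs(1)] gen g by simp
  moreover have "D #> x \<in> carrier (G Mod D)" if "x \<in> set xs" for x
    using xs(1) that by auto
  ultimately obtain f
    where "D #> g = list_prod (G Mod D) (map (\<lambda>x. (D #> x) [^]\<^bsub>G Mod D\<^esub> (f x :: int)) xs)"
    using Q.generate_int_pow_product[OF xs(2)] by blast
  also have "\<dots> = list_prod (G Mod D) (map (\<lambda>x. D #> x [^] f x) xs)"
    using xs(1)
    by (intro arg_cong[where f = "list_prod (G Mod D)"] map_cong) (auto simp: h.hom_int_pow)
  also have "\<dots> = D #> list_prod G (map (\<lambda>x. x [^] f x) xs)"
    using xs(1) by (subst h.hom_list_prod) (auto simp: comp_def)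
  finally have "g \<in> D #> list_prod G (map (\<lambda>x. x [^] f x) xs)"
    using repr_independenceD[OF D.subgroup_axioms g] by simp
  then show ?thesis
    unfolding D_def r_coset_def by blast
qed

lemma carrier_subset_pal_products:
  assumes gen: "generate G (set xs) = carrier G" and xs: "set xs \<subseteq> carrier G" "distinct xs"
    and cw: "comm_width G \<le> enat l"
    and comm: "\<And>a b. a \<in> carrier G \<Longrightarrow> b \<in> carrier G \<Longrightarrow> commutator G a b \<in> pal_products G (set xs) N"
  shows "carrier G \<subseteq> pal_products G (set xs) (N * l + length xs)"
proof
  fix g
  assume g: "g \<in> carrier G"
  obtain d f where d: "d \<in> derived G (carrier G)"
    and g_eq: "g = d \<otimes> list_prod G (map (\<lambda>x. x [^] (f x :: int)) xs)"
    using derived_times_generator_powers[OF gen xs g] by blast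
  obtain cs where cs: "length cs \<le> l" "set cs \<subseteq> carrier G \<times> carrier G"
    "list_prod G (map (\<lambda>(a, b). commutator G a b) cs) = d"
    using derived_short_commutator_product[OF cw d] by blast
  have "set (map (\<lambda>(a, b). commutator G a b) cs) \<subseteq> pal_products G (set xs) N"
    using cs(2) comm by auto
  then have "d \<in> pal_products G (set xs) (N * length cs)"
    using list_prod_in_pal_products[OF xs(1)] cs(3) by fastforce
  then have "d \<in> pal_products G (set xs) (N * l)"
    using pal_products_mono[OF xs(1)] cs(1) by (meson mult_le_mono2 subsetD)
  moreover have "set (map (\<lambda>x. x [^] f x) xs) \<subseteq> pal_products G (set xs) 1"
    using palindrome_in_pal_products_1[OF xs(1)] generator_pow_in_palindromes[OF xs(1)] by auto
  then have "list_prod G (map (\<lambda>x. x [^] f x) xs) \<in> pal_products G (set xs) (1 * length xs)"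
    using list_prod_in_pal_products[OF xs(1)] by fastforce
  ultimately show "g \<in> pal_products G (set xs) (N * l + length xs)"
    unfolding g_eq using pal_products_mult[OF xs(1)] by simp
qed

end

theorem proposition2p8:
  fixes G (structure) and S :: "'a set" and n l k :: nat
  assumes "group G"
    and "S \<subseteq> carrier G" and "finite S" and "card S = n"
    and "generate G S = carrier G"
    and "center G \<noteq> {\<one>}"
    and "comm_width G = enat l"
    and "pal_width (G Mod (center G)) ((\<lambda>x. center G #> x) ` S) = enat k"
  shows "pal_width G S \<le> enat (n + l * (2 * k + (if even k then 0 else 1)))"
proof -
  interpret group G
    by fact
  obtain xs where xs: "set xs = S" "distinct xs"
    using finite_distinct_list[OF assms(3)] by blast
  have "length xs = n"
    using xs assms(4) distinct_card by fastforce
  have reps: "\<exists>x \<in> pal_products G S k. \<exists>z \<in> center G. a = z \<otimes> x" if "a \<in> carrier G" for a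
    using lift_from_quotient_pal_products[OF center_normal assms(2,5)] assms(8) that by simp
  have "carrier G \<subseteq> pal_products G S ((2 * k + (if even k then 0 else 1)) * l + n)"
    using carrier_subset_pal_products[of xs l "2 * k + (if even k then 0 else 1)"]
      commutator_in_pal_products[OF assms(2,5) reps] assms(2,5,7) xs \<open>length xs = n\<close>
    by auto
  then show ?thesis
    by (intro pal_width_le) (auto simp: ac_simps)
qed

end
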